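(* Let $\mathscr{H}_2$ be the class of graphs $G$ on at least twelve vertices with $\gamma(G)=2$ and $\operatorname{diam}(\overline{G})=2$. Then $\mathscr{H}_2$ is recognizable: every graph $H$ with $\mathscr{D}(H)=\mathscr{D}(G)$ for some $G\in\mathscr{H}_2$ belongs to $\mathscr{H}_2$.
   Context: All graphs are finite, simple and undirected; $\overline{G}$ is the complement, $\operatorname{diam}$ the diameter and $\gamma$ the domination number. For a vertex $v$, the card $G-v$ is the unlabeled graph obtained by deleting $v$; the deck $\mathscr{D}(G)$ is the multiset of all cards up to isomorphism. A class of graphs is recognizable if every reconstruction (graph with the same deck) of a member of the class is again a member. *)

theory Defs
  imports Main "HOL-Library.Extended_Nat"
begin

type_synonym 'a graph = "'a set \<times> 'a set set"

definition verts :: "'a graph \<Rightarrow> 'a set" where "verts G = fst G"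
definition edges :: "'a graph \<Rightarrow> 'a set set" where "edges G = snd G"

definition wf_graph :: "'a graph \<Rightarrow> bool" where
  "wf_graph G \<longleftrightarrow> finite (verts G) \<and>
     (\<forall>e\<in>edges G. \<exists>u v. u \<noteq> v \<and> u \<in> verts G \<and> v \<in> verts G \<and> e = {u, v})"

definition adj :: "'a graph \<Rightarrow> 'a \<Rightarrow> 'a \<Rightarrow> bool" where
  "adj G u v \<longleftrightarrow> {u, v} \<in> edges G"

definition compl_graph :: "'a graph \<Rightarrow> 'a graph" where
  "compl_graph G = (verts G,
     {{u, v} | u v. u \<in> verts G \<and> v \<in> verts G \<and> u \<noteq> v \<and> {u, v} \<notin> edges G})"

definition delete_vertex :: "'a graph \<Rightarrow> 'a \<Rightarrow> 'a graph" where
  "delete_vertex G v = (verts G - {v}, {e \<in> edges G. v \<notin> e})"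

definition graph_iso :: "'a graph \<Rightarrow> 'b graph \<Rightarrow> bool" where
  "graph_iso G H \<longleftrightarrow> (\<exists>f. bij_betw f (verts G) (verts H) \<and>
     (\<forall>u\<in>verts G. \<forall>v\<in>verts G. adj G u v \<longleftrightarrow> adj H (f u) (f v)))"

text \<open>Equal decks: a bijection of vertices matching cards up to isomorphism
  (equivalently, the multisets of isomorphism classes of cards coincide).\<close>
definition same_deck :: "'a graph \<Rightarrow> 'b graph \<Rightarrow> bool" where
  "same_deck G H \<longleftrightarrow> (\<exists>\<sigma>. bij_betw \<sigma> (verts G) (verts H) \<and>
     (\<forall>v\<in>verts G. graph_iso (delete_vertex G v) (delete_vertex H (\<sigma> v))))"

definition dominating :: "'a graph \<Rightarrow> 'a set \<Rightarrow> bool" where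
  "dominating G D \<longleftrightarrow> D \<subseteq> verts G \<and>
     (\<forall>v\<in>verts G - D. \<exists>u\<in>D. adj G u v)"

definition domination_number :: "'a graph \<Rightarrow> nat" where
  "domination_number G = Min {card D | D. dominating G D}"

definition walk :: "'a graph \<Rightarrow> 'a list \<Rightarrow> bool" where
  "walk G xs \<longleftrightarrow> xs \<noteq> [] \<and> set xs \<subseteq> verts G \<and>
     (\<forall>i. Suc i < length xs \<longrightarrow> adj G (xs ! i) (xs ! Suc i))"

definition has_walk_len :: "'a graph \<Rightarrow> 'a \<Rightarrow> 'a \<Rightarrow> nat \<Rightarrow> bool" where
  "has_walk_len G u v n \<longleftrightarrow>
     (\<exists>xs. walk G xs \<and> hd xs = u \<and> last xs = v \<and> length xs = Suc n)"

definition dist :: "'a graph \<Rightarrow> 'a \<Rightarrow> 'a \<Rightarrow> enat" where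
  "dist G u v = (if \<exists>n. has_walk_len G u v n
                 then enat (LEAST n. has_walk_len G u v n) else \<infinity>)"

definition diam :: "'a graph \<Rightarrow> enat" where
  "diam G = Sup {dist G u v | u v. u \<in> verts G \<and> v \<in> verts G}"

definition class_H2 :: "'a graph \<Rightarrow> bool" where
  "class_H2 G \<longleftrightarrow> wf_graph G \<and> card (verts G) \<ge> 12 \<and>
     domination_number G = 2 \<and> diam (compl_graph G) = 2"

end

theory Submission
  imports Defs
begin

text \<open>
  For a pair {x, y} of distinct vertices call a vertex outside the pair undominated if it is
  adjacent to neither x nor y. Since diam of the complement is at most 2 exactly when every edge
  has a common non-neighbour, a graph on n \<ge> 12 vertices lies in H_2 iff no edge leaves zero
  vertices undominated while some non-edge does.

  Let a_k count the edges (or the non-edges) leaving exactly k vertices undominated. Counting over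
  the cards, a pair survives in G - w unless w lies in it, and loses an undominated vertex iff w
  was one, so the deck determines (n - 2 - k) a_k + (k + 1) a_(k+1) for every k. For a
  reconstruction H the differences d_k = a_k(G) - a_k(H) therefore satisfy
  d_k = (-1)^k C(n-2, k) d_0, and |d_3| \<le> C(n, 2) < C(n-2, 3) forces d_0 = 0.
\<close>

lemma binomial_recurrence_solution:
  fixes d :: "nat \<Rightarrow> int"
  assumes rec: "\<And>k. int (m - k) * d k + int (Suc k) * d (Suc k) = 0"
  shows "d k = (-1) ^ k * int (m choose k) * d 0"
proof (induction k)
  case 0
  then show ?case by simp
next
  case (Suc k)
  have "Suc k * (m choose Suc k) = (m - k) * (m choose k)"
    using binomial_absorption[of k m] binomial_absorb_comp[of m k] by simp
  then have absorb: "int (Suc k) * int (m choose Suc k) = int (m - k) * int (m choose k)"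
    by (metis of_nat_mult)
  have "int (Suc k) * d (Suc k) = - int (m - k) * d k"
    using rec[of k] by simp
  also have "\<dots> = - ((-1) ^ k * d 0) * (int (m - k) * int (m choose k))"
    using Suc.IH by (simp add: algebra_simps)
  also have "\<dots> = int (Suc k) * ((-1) ^ Suc k * int (m choose Suc k) * d 0)"
    unfolding absorb[symmetric] by (simp add: algebra_simps)
  finally show ?case
    by (metis mult_cancel_left of_nat_eq_0_iff nat.distinct(1))
qed

lemma choose_two_less_choose_three:
  assumes "10 \<le> n" shows "n choose 2 < (n - 2) choose 3"
proof -
  have two: "2 * (k choose 2) = k * (k - 1)" for k :: nat
    using binomial_absorption[of 1 k] by (simp add: numeral_2_eq_2)
  have three: "3 * (k choose 3) = k * ((k - 1) choose 2)" for k :: nat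
    using binomial_absorption[of 2 k] by (simp add: numeral_3_eq_3 numeral_2_eq_2)
  obtain m where n: "n = m + 10" using assms by (metis add.commute le_iff_add)
  have "6 * (n choose 2) = 3 * ((m + 10) * (m + 9))"
    using two[of n] unfolding n by simp
  also have "\<dots> < (m + 8) * ((m + 7) * (m + 6))"
    by (simp add: algebra_simps)
  also have "\<dots> = (m + 8) * (2 * ((m + 7) choose 2))"
    using two[of "m + 7"] by simp
  also have "\<dots> = 2 * (3 * ((m + 8) choose 3))"
    using three[of "m + 8"] by (simp add: add.commute)
  also have "\<dots> = 6 * ((n - 2) choose 3)"
    unfolding n by (simp add: add.commute)
  finally show ?thesis by simp
qed

lemma verts_delete_vertex [simp]: "verts (delete_vertex G w) = verts G - {w}"
  by (simp add: delete_vertex_def verts_def)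

lemma adj_delete_vertex [simp]:
  "adj (delete_vertex G w) x y \<longleftrightarrow> adj G x y \<and> x \<noteq> w \<and> y \<noteq> w"
  by (auto simp add: delete_vertex_def edges_def adj_def)

lemma adj_commute: "adj G x y \<longleftrightarrow> adj G y x"
  by (simp add: adj_def insert_commute)

lemma verts_compl_graph [simp]: "verts (compl_graph G) = verts G"
  by (simp add: compl_graph_def verts_def)

lemma adj_compl_graph:
  "adj (compl_graph G) x y \<longleftrightarrow> x \<in> verts G \<and> y \<in> verts G \<and> x \<noteq> y \<and> \<not> adj G x y"
proof
  assume "adj (compl_graph G) x y"
  then obtain u v where "{x, y} = {u, v}" "u \<in> verts G" "v \<in> verts G" "u \<noteq> v" "{u, v} \<notin> edges G"
    by (auto simp: adj_def compl_graph_def edges_def verts_def)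
  then show "x \<in> verts G \<and> y \<in> verts G \<and> x \<noteq> y \<and> \<not> adj G x y"
    by (auto simp: adj_def doubleton_eq_iff insert_commute)
next
  assume "x \<in> verts G \<and> y \<in> verts G \<and> x \<noteq> y \<and> \<not> adj G x y"
  then show "adj (compl_graph G) x y"
    by (auto simp: adj_def compl_graph_def edges_def verts_def)
qed

definition undominated :: "'a graph \<Rightarrow> 'a set \<Rightarrow> 'a set" where
  "undominated G S = {w \<in> verts G - S. \<forall>s\<in>S. \<not> adj G s w}"

definition vertex_pairs :: "'a graph \<Rightarrow> bool \<Rightarrow> 'a set set" where
  "vertex_pairs G b = {{x, y} | x y. x \<in> verts G \<and> y \<in> verts G \<and> x \<noteq> y \<and> adj G x y = b}"

definition pairs_with_undominated :: "'a graph \<Rightarrow> bool \<Rightarrow> nat \<Rightarrow> 'a set set" where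
  "pairs_with_undominated G b k = {S \<in> vertex_pairs G b. card (undominated G S) = k}"

lemma undominated_subset: "undominated G S \<subseteq> verts G - S"
  by (auto simp: undominated_def)

lemma undominated_delete_vertex:
  "w \<notin> S \<Longrightarrow> undominated (delete_vertex G w) S = undominated G S - {w}"
  by (auto simp: undominated_def)

lemma vertex_pairs_delete_vertex:
  "vertex_pairs (delete_vertex G w) b = {S \<in> vertex_pairs G b. w \<notin> S}"
  by (auto simp: vertex_pairs_def)

lemma vertex_pairsD: "S \<in> vertex_pairs G b \<Longrightarrow> S \<subseteq> verts G \<and> card S = 2"
  by (auto simp: vertex_pairs_def)

lemma finite_vertex_pairs: "finite (verts G) \<Longrightarrow> finite (vertex_pairs G b)"
  by (rule finite_subset[of _ "Pow (verts G)"]) (auto dest: vertex_pairsD)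

lemma finite_pairs_with_undominated:
  "finite (verts G) \<Longrightarrow> finite (pairs_with_undominated G b k)"
  unfolding pairs_with_undominated_def by (simp add: finite_vertex_pairs)

lemma card_pairs_with_undominated_le:
  assumes "finite (verts G)"
  shows "card (pairs_with_undominated G b k) \<le> card (verts G) choose 2"
proof -
  have "pairs_with_undominated G b k \<subseteq> {S. S \<subseteq> verts G \<and> card S = 2}"
    by (auto simp: pairs_with_undominated_def dest: vertex_pairsD)
  then have "card (pairs_with_undominated G b k) \<le> card {S. S \<subseteq> verts G \<and> card S = 2}"
    using assms by (intro card_mono) auto
  then show ?thesis using n_subsets[OF assms] by simp
qed

lemma card_remove_point_eq:
  assumes "finite A" "U \<subseteq> A"
  shows "card {w \<in> A. card (U - {w}) = k} =
    (if card U = k then card A - k else 0) + (if card U = Suc k then Suc k else 0)"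
proof -
  have finU: "finite U" using assms finite_subset by blast
  have "w \<in> {w \<in> A. card (U - {w}) = k} \<longleftrightarrow>
      w \<in> (if card U = k then A - U else {}) \<union> (if card U = Suc k then U else {})" for w
  proof (cases "w \<in> U")
    case True
    then show ?thesis using card_Suc_Diff1[OF finU True] assms(2) by auto
  next
    case False
    then show ?thesis by simp
  qed
  then show ?thesis
    using assms finU by (auto simp: card_Diff_subset simp del: card_Diff_insert)
qed

lemma sum_card_pairs_delete_vertex:
  assumes fin: "finite (verts G)"
  shows "(\<Sum>w\<in>verts G. card (pairs_with_undominated (delete_vertex G w) b k)) =
    (card (verts G) - 2 - k) * card (pairs_with_undominated G b k)
      + Suc k * card (pairs_with_undominated G b (Suc k))"
proof -
  let ?P = "vertex_pairs G b" and ?U = "undominated G" and ?n = "card (verts G)"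
  have finP: "finite ?P" using fin by (rule finite_vertex_pairs)
  have "pairs_with_undominated (delete_vertex G w) b k =
      {S \<in> ?P. w \<notin> S \<and> card (?U S - {w}) = k}" for w
    by (auto simp: pairs_with_undominated_def vertex_pairs_delete_vertex undominated_delete_vertex)
  then have "(\<Sum>w\<in>verts G. card (pairs_with_undominated (delete_vertex G w) b k)) =
      (\<Sum>w\<in>verts G. \<Sum>S\<in>?P. of_bool (w \<notin> S \<and> card (?U S - {w}) = k))"
    using finP by (simp add: Int_def)
  also have "\<dots> = (\<Sum>S\<in>?P. card {w \<in> verts G - S. card (?U S - {w}) = k})"
    using fin by (subst sum.swap) (simp add: Int_def set_diff_eq conj_ac)
  also have "\<dots> = (\<Sum>S\<in>?P. (if card (?U S) = k then ?n - 2 - k else 0)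
      + (if card (?U S) = Suc k then Suc k else 0))"
  proof (rule sum.cong[OF refl])
    fix S assume "S \<in> ?P"
    then have card_rest: "card (verts G - S) = ?n - 2"
      using fin vertex_pairsD[of S G b] by (metis card_Diff_subset finite_subset)
    show "card {w \<in> verts G - S. card (?U S - {w}) = k} =
        (if card (?U S) = k then ?n - 2 - k else 0) + (if card (?U S) = Suc k then Suc k else 0)"
      unfolding card_remove_point_eq[OF finite_Diff[OF fin] undominated_subset] card_rest ..
  qed
  also have "\<dots> = (?n - 2 - k) * card (pairs_with_undominated G b k)
      + Suc k * card (pairs_with_undominated G b (Suc k))"
    using finP by (simp add: sum.distrib sum.If_cases pairs_with_undominated_def Int_def)
  finally show ?thesis .
qed

lemma undominated_image:
  assumes bij: "bij_betw f (verts G1) (verts G2)"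
    and adj_f: "\<And>u v. u \<in> verts G1 \<Longrightarrow> v \<in> verts G1 \<Longrightarrow> adj G1 u v \<longleftrightarrow> adj G2 (f u) (f v)"
    and S: "S \<subseteq> verts G1"
  shows "undominated G2 (f ` S) = f ` undominated G1 S"
proof -
  have inj: "inj_on f (verts G1)" and im: "f ` verts G1 = verts G2"
    using bij by (auto simp: bij_betw_def)
  have "f x \<in> f ` S \<longleftrightarrow> x \<in> S" "(\<forall>s\<in>S. \<not> adj G2 (f s) (f x)) \<longleftrightarrow> (\<forall>s\<in>S. \<not> adj G1 s x)"
    if "x \<in> verts G1" for x
    using that S inj adj_f by (auto simp: inj_on_image_mem_iff)
  then show ?thesis
    unfolding undominated_def im[symmetric] by auto
qed

lemma vertex_pairs_image:
  assumes bij: "bij_betw f (verts G1) (verts G2)"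
    and adj_f: "\<And>u v. u \<in> verts G1 \<Longrightarrow> v \<in> verts G1 \<Longrightarrow> adj G1 u v \<longleftrightarrow> adj G2 (f u) (f v)"
  shows "vertex_pairs G2 b = (`) f ` vertex_pairs G1 b"
proof -
  have inj: "inj_on f (verts G1)" and im: "f ` verts G1 = verts G2"
    using bij by (auto simp: bij_betw_def)
  show ?thesis
  proof (intro equalityI subsetI)
    fix T assume "T \<in> vertex_pairs G2 b"
    then obtain x' y' where "x' \<in> verts G2" "y' \<in> verts G2" "x' \<noteq> y'" "adj G2 x' y' = b"
      "T = {x', y'}"
      by (auto simp: vertex_pairs_def)
    moreover obtain x y where "x \<in> verts G1" "y \<in> verts G1" "x' = f x" "y' = f y"
      using im \<open>x' \<in> verts G2\<close> \<open>y' \<in> verts G2\<close> by blast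
    ultimately have "{x, y} \<in> vertex_pairs G1 b" "T = f ` {x, y}"
      using adj_f unfolding vertex_pairs_def by auto
    then show "T \<in> (`) f ` vertex_pairs G1 b" by blast
  next
    fix T assume "T \<in> (`) f ` vertex_pairs G1 b"
    then obtain x y where "x \<in> verts G1" "y \<in> verts G1" "x \<noteq> y" "adj G1 x y = b" "T = {f x, f y}"
      by (auto simp: vertex_pairs_def)
    moreover have "f x \<noteq> f y" "adj G2 (f x) (f y) = b"
      using calculation adj_f inj by (auto dest: inj_onD)
    ultimately show "T \<in> vertex_pairs G2 b"
      using im unfolding vertex_pairs_def by blast
  qed
qed

lemma card_pairs_with_undominated_iso:
  assumes "graph_iso G1 G2"
  shows "card (pairs_with_undominated G1 b k) = card (pairs_with_undominated G2 b k)"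
proof -
  obtain f where bij: "bij_betw f (verts G1) (verts G2)"
    and adj_f: "\<And>u v. u \<in> verts G1 \<Longrightarrow> v \<in> verts G1 \<Longrightarrow> adj G1 u v \<longleftrightarrow> adj G2 (f u) (f v)"
    using assms unfolding graph_iso_def by blast
  have inj: "inj_on f (verts G1)"
    using bij by (simp add: bij_betw_def)
  have card_undom: "card (undominated G2 (f ` S)) = card (undominated G1 S)"
    if "S \<in> vertex_pairs G1 b" for S
    using that undominated_image[OF bij adj_f] inj undominated_subset
    by (metis card_image inj_on_subset subset_trans Diff_subset vertex_pairsD)
  have "pairs_with_undominated G2 b k = (`) f ` pairs_with_undominated G1 b k"
    using vertex_pairs_image[OF bij adj_f, of b] unfolding pairs_with_undominated_def
    by (auto simp: image_iff card_undom)
  moreover have "inj_on ((`) f) (pairs_with_undominated G1 b k)"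
  proof (rule inj_onI)
    fix S1 S2 assume "S1 \<in> pairs_with_undominated G1 b k" "S2 \<in> pairs_with_undominated G1 b k"
      and "f ` S1 = f ` S2"
    then show "S1 = S2"
      using inj_on_image_eq_iff[OF inj] vertex_pairsD unfolding pairs_with_undominated_def
      by (metis (no_types, lifting) mem_Collect_eq)
  qed
  ultimately show ?thesis by (simp add: card_image)
qed

lemma card_verts_same_deck: "same_deck G H \<Longrightarrow> card (verts H) = card (verts G)"
  unfolding same_deck_def by (metis bij_betw_same_card)

lemma sum_card_pairs_delete_vertex_same_deck:
  assumes "same_deck G H"
  shows "(\<Sum>v\<in>verts G. card (pairs_with_undominated (delete_vertex G v) b k)) =
    (\<Sum>v\<in>verts H. card (pairs_with_undominated (delete_vertex H v) b k))"
proof -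
  obtain \<sigma> where \<sigma>: "bij_betw \<sigma> (verts G) (verts H)"
    and cards: "\<And>v. v \<in> verts G \<Longrightarrow> graph_iso (delete_vertex G v) (delete_vertex H (\<sigma> v))"
    using assms unfolding same_deck_def by blast
  have "(\<Sum>v\<in>verts G. card (pairs_with_undominated (delete_vertex G v) b k)) =
      (\<Sum>v\<in>verts G. card (pairs_with_undominated (delete_vertex H (\<sigma> v)) b k))"
    by (rule sum.cong[OF refl]) (simp add: cards card_pairs_with_undominated_iso)
  also have "\<dots> = (\<Sum>v\<in>verts H. card (pairs_with_undominated (delete_vertex H v) b k))"
    by (rule sum.reindex_bij_betw[OF \<sigma>])
  finally show ?thesis .
qed

lemma card_pairs_with_undominated_same_deck:
  assumes deck: "same_deck G H" and finG: "finite (verts G)" and finH: "finite (verts H)"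
    and n: "10 \<le> card (verts G)"
  shows "card (pairs_with_undominated G b k) = card (pairs_with_undominated H b k)"
proof -
  let ?n = "card (verts G)"
  define d where
    "d j = int (card (pairs_with_undominated G b j)) - int (card (pairs_with_undominated H b j))" for j
  have "int (?n - 2 - j) * d j + int (Suc j) * d (Suc j) = 0" for j
    using sum_card_pairs_delete_vertex_same_deck[OF deck, of b j]
      sum_card_pairs_delete_vertex[OF finG, of b j] sum_card_pairs_delete_vertex[OF finH, of b j]
    unfolding card_verts_same_deck[OF deck] d_def
    by (simp add: algebra_simps flip: of_nat_mult of_nat_add)
  then have d: "d j = (-1) ^ j * int ((?n - 2) choose j) * d 0" for j
    by (rule binomial_recurrence_solution)
  have "\<bar>d 3\<bar> \<le> int (?n choose 2)"
    using card_pairs_with_undominated_le[OF finG, of b 3] card_pairs_with_undominated_le[OF finH, of b 3]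
    unfolding d_def card_verts_same_deck[OF deck] by linarith
  moreover have "\<bar>d 3\<bar> = int ((?n - 2) choose 3) * \<bar>d 0\<bar>"
    using d[of 3] by (simp add: abs_mult)
  moreover have "int (?n choose 2) < int ((?n - 2) choose 3)"
    using choose_two_less_choose_three[OF n] by simp
  ultimately have "d 0 = 0"
    by (smt (verit) mult_le_cancel_left1)
  then show ?thesis
    using d[of k] unfolding d_def by simp
qed

lemma has_walk_len_0_iff: "has_walk_len G u v 0 \<longleftrightarrow> u = v \<and> u \<in> verts G"
proof
  assume "has_walk_len G u v 0"
  then obtain xs where "walk G xs" "hd xs = u" "last xs = v" "length xs = Suc 0"
    unfolding has_walk_len_def by auto
  then show "u = v \<and> u \<in> verts G" unfolding walk_def by (auto simp: length_Suc_conv)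
next
  assume "u = v \<and> u \<in> verts G"
  then show "has_walk_len G u v 0" unfolding has_walk_len_def walk_def
    by (intro exI[of _ "[u]"]) auto
qed

lemma has_walk_len_1_iff: "has_walk_len G u v 1 \<longleftrightarrow> u \<in> verts G \<and> v \<in> verts G \<and> adj G u v"
proof
  assume "has_walk_len G u v 1"
  then obtain xs where "walk G xs" "hd xs = u" "last xs = v" "length xs = Suc (Suc 0)"
    unfolding has_walk_len_def by auto
  then show "u \<in> verts G \<and> v \<in> verts G \<and> adj G u v" unfolding walk_def
    by (auto simp: length_Suc_conv)
next
  assume "u \<in> verts G \<and> v \<in> verts G \<and> adj G u v"
  then show "has_walk_len G u v 1" unfolding has_walk_len_def walk_def
    by (intro exI[of _ "[u, v]"]) (auto simp: less_Suc_eq)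
qed

lemma has_walk_len_2_iff:
  "has_walk_len G u v 2 \<longleftrightarrow> u \<in> verts G \<and> v \<in> verts G \<and> (\<exists>w\<in>verts G. adj G u w \<and> adj G w v)"
proof
  assume "has_walk_len G u v 2"
  then obtain xs where xs: "walk G xs" "hd xs = u" "last xs = v" "length xs = Suc (Suc (Suc 0))"
    unfolding has_walk_len_def by (auto simp: numeral_2_eq_2)
  then obtain w where "xs = [u, w, v]" by (auto simp: length_Suc_conv)
  moreover have "adj G (xs ! 0) (xs ! 1)" "adj G (xs ! 1) (xs ! 2)"
    using xs unfolding walk_def by (auto simp: numeral_2_eq_2)
  ultimately show "u \<in> verts G \<and> v \<in> verts G \<and> (\<exists>w\<in>verts G. adj G u w \<and> adj G w v)"
    using xs unfolding walk_def by auto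
next
  assume "u \<in> verts G \<and> v \<in> verts G \<and> (\<exists>w\<in>verts G. adj G u w \<and> adj G w v)"
  then obtain w where "walk G [u, w, v]"
    unfolding walk_def by (auto simp: less_Suc_eq)
  then show "has_walk_len G u v 2" unfolding has_walk_len_def
    by (intro exI[of _ "[u, w, v]"]) (auto simp: numeral_2_eq_2)
qed

lemma dist_le_2_iff:
  "dist G u v \<le> 2 \<longleftrightarrow> has_walk_len G u v 0 \<or> has_walk_len G u v 1 \<or> has_walk_len G u v 2"
proof -
  have "dist G u v \<le> 2 \<longleftrightarrow> (\<exists>m\<le>2. has_walk_len G u v m)"
  proof
    assume le: "dist G u v \<le> 2"
    then have ex: "\<exists>n. has_walk_len G u v n"
      unfolding dist_def by (auto split: if_splits)
    then have "(LEAST n. has_walk_len G u v n) \<le> 2"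
      using le unfolding dist_def by (simp add: numeral_eq_enat)
    then show "\<exists>m\<le>2. has_walk_len G u v m"
      using LeastI_ex[OF ex] by blast
  next
    assume "\<exists>m\<le>2. has_walk_len G u v m"
    then obtain m where "m \<le> 2" "has_walk_len G u v m" by blast
    then show "dist G u v \<le> 2"
      unfolding dist_def by (auto simp: numeral_eq_enat intro: Least_le order_trans)
  qed
  also have "\<dots> \<longleftrightarrow> has_walk_len G u v 0 \<or> has_walk_len G u v 1 \<or> has_walk_len G u v 2"
    by (auto simp: le_Suc_eq numeral_2_eq_2)
  finally show ?thesis .
qed

lemma dist_eq_2_iff:
  "dist G u v = 2 \<longleftrightarrow>
    has_walk_len G u v 2 \<and> \<not> has_walk_len G u v 0 \<and> \<not> has_walk_len G u v 1"
proof -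
  have "dist G u v = 2 \<longleftrightarrow> (\<exists>n. has_walk_len G u v n) \<and> (LEAST n. has_walk_len G u v n) = 2"
    unfolding dist_def by (simp add: numeral_eq_enat)
  also have "\<dots> \<longleftrightarrow> has_walk_len G u v 2 \<and> (\<forall>m<2. \<not> has_walk_len G u v m)"
    by (metis LeastI_ex Least_equality not_less_Least not_le)
  also have "\<dots> \<longleftrightarrow> has_walk_len G u v 2 \<and> \<not> has_walk_len G u v 0 \<and> \<not> has_walk_len G u v 1"
    by (auto simp: less_2_cases_iff)
  finally show ?thesis .
qed

lemma Sup_enat_eq_2_iff: "Sup D = (2 :: enat) \<longleftrightarrow> (\<forall>d\<in>D. d \<le> 2) \<and> 2 \<in> D"
proof
  assume sup: "Sup D = 2"
  then have le: "\<forall>d\<in>D. d \<le> 2" by (metis Sup_upper)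
  have "2 \<in> D"
  proof (rule ccontr)
    assume "2 \<notin> D"
    moreover have "d \<le> 1" if "d \<le> 2" "d \<noteq> 2" for d :: enat
      using that by (cases d) (auto simp: numeral_eq_enat one_enat_def)
    ultimately have "\<forall>d\<in>D. d \<le> 1"
      using le by metis
    then have "Sup D \<le> 1" by (simp add: Sup_le_iff)
    then show False using sup by simp
  qed
  with le show "(\<forall>d\<in>D. d \<le> 2) \<and> 2 \<in> D" ..
next
  assume "(\<forall>d\<in>D. d \<le> 2) \<and> 2 \<in> D"
  then show "Sup D = 2"
    by (metis Sup_least Sup_upper antisym)
qed

lemma diam_eq_2_iff:
  "diam G = 2 \<longleftrightarrow>
    (\<forall>u\<in>verts G. \<forall>v\<in>verts G. dist G u v \<le> 2) \<and> (\<exists>u\<in>verts G. \<exists>v\<in>verts G. dist G u v = 2)"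
  unfolding diam_def Sup_enat_eq_2_iff by (auto simp: eq_commute[of 2])

lemma has_walk_len_compl_graph_2_iff:
  assumes "u \<in> verts G" "v \<in> verts G" "u \<noteq> v"
  shows "has_walk_len (compl_graph G) u v 2 \<longleftrightarrow> undominated G {u, v} \<noteq> {}"
  using assms by (auto simp: has_walk_len_2_iff adj_compl_graph undominated_def adj_commute)

lemma dist_compl_graph_le_2_iff:
  assumes "u \<in> verts G" "v \<in> verts G"
  shows "dist (compl_graph G) u v \<le> 2 \<longleftrightarrow> \<not> (u \<noteq> v \<and> adj G u v \<and> undominated G {u, v} = {})"
  using assms has_walk_len_compl_graph_2_iff[OF assms]
  by (cases "u = v") (auto simp: dist_le_2_iff has_walk_len_0_iff has_walk_len_1_iff[unfolded One_nat_def] adj_compl_graph)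

lemma dist_compl_graph_eq_2_iff:
  assumes "u \<in> verts G" "v \<in> verts G"
  shows "dist (compl_graph G) u v = 2 \<longleftrightarrow> u \<noteq> v \<and> adj G u v \<and> undominated G {u, v} \<noteq> {}"
  using assms has_walk_len_compl_graph_2_iff[OF assms]
  by (cases "u = v") (auto simp: dist_eq_2_iff has_walk_len_0_iff has_walk_len_1_iff[unfolded One_nat_def] adj_compl_graph)

lemma diam_compl_graph_eq_2_iff:
  "diam (compl_graph G) = 2 \<longleftrightarrow>
    (\<forall>x\<in>verts G. \<forall>y\<in>verts G. x \<noteq> y \<and> adj G x y \<longrightarrow> undominated G {x, y} \<noteq> {}) \<and>
    (\<exists>x\<in>verts G. \<exists>y\<in>verts G. x \<noteq> y \<and> adj G x y)"
  unfolding diam_eq_2_iff verts_compl_graph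
  using dist_compl_graph_le_2_iff[of _ G] dist_compl_graph_eq_2_iff[of _ G] by metis

lemma exists_not_in_of_card_less: "finite S \<Longrightarrow> card S < card A \<Longrightarrow> \<exists>x\<in>A. x \<notin> S"
  by (meson card_mono not_le subsetI)

lemma dominating_iff_undominated_empty:
  "dominating G S \<longleftrightarrow> S \<subseteq> verts G \<and> undominated G S = {}"
  by (auto simp: dominating_def undominated_def)

lemma undominated_anti_mono: "S \<subseteq> T \<Longrightarrow> undominated G T \<subseteq> undominated G S"
  by (auto simp: undominated_def)

lemma domination_number_eq_iff:
  assumes "finite (verts G)"
  shows "domination_number G = k \<longleftrightarrow>
    (\<exists>D. dominating G D \<and> card D = k) \<and> (\<forall>D. dominating G D \<longrightarrow> k \<le> card D)"
proof -
  let ?C = "{card D | D. dominating G D}"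
  have "?C \<subseteq> {..card (verts G)}"
    using assms by (auto simp: dominating_def intro: card_mono)
  then have "finite ?C" by (rule finite_subset) simp
  moreover have "?C \<noteq> {}"
    by (auto simp: dominating_def)
  ultimately show ?thesis
    unfolding domination_number_def by (auto simp: Min_eq_iff)
qed

lemma domination_number_eq_2_iff:
  assumes fin: "finite (verts G)" and two: "2 \<le> card (verts G)"
    and no_dominating_edge:
      "\<And>x y. x \<in> verts G \<Longrightarrow> y \<in> verts G \<Longrightarrow> x \<noteq> y \<Longrightarrow> adj G x y \<Longrightarrow> undominated G {x, y} \<noteq> {}"
  shows "domination_number G = 2 \<longleftrightarrow> (\<exists>x y. x \<noteq> y \<and> dominating G {x, y})"
proof -
  have "2 \<le> card D" if D: "dominating G D" for D
  proof (rule ccontr)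
    assume "\<not> 2 \<le> card D"
    moreover have "finite D" "D \<subseteq> verts G"
      using D fin by (auto simp: dominating_def finite_subset)
    moreover have "D \<noteq> {}"
      using D two by (auto simp: dominating_def)
    ultimately have "card D = 1" and "D \<subseteq> verts G"
      using card_gt_0_iff[of D] by linarith+
    then obtain z where z: "D = {z}" "z \<in> verts G"
      by (auto simp: card_1_singleton_iff)
    obtain y where y: "y \<in> verts G" "y \<noteq> z"
      using exists_not_in_of_card_less[of "{z}" "verts G"] two by auto
    then have "adj G z y"
      using D z unfolding dominating_def by auto
    moreover have "undominated G {z, y} = {}"
      using D z undominated_anti_mono[of "{z}" "{z, y}" G]
      by (auto simp: dominating_iff_undominated_empty)
    ultimately show False
      using no_dominating_edge y z by blast
  qed
  then show ?thesis
    using domination_number_eq_iff[OF fin] by (auto simp: card_2_iff)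
qed

lemma pairs_with_undominated_0_eq_empty_iff:
  assumes "finite (verts G)"
  shows "pairs_with_undominated G b 0 = {} \<longleftrightarrow>
    (\<forall>x\<in>verts G. \<forall>y\<in>verts G. x \<noteq> y \<and> adj G x y = b \<longrightarrow> undominated G {x, y} \<noteq> {})"
proof -
  have "finite (undominated G S)" for S
    using assms undominated_subset[of G S] by (meson finite_Diff finite_subset)
  then have "card (undominated G S) = 0 \<longleftrightarrow> undominated G S = {}" for S
    by simp
  then show ?thesis
    unfolding pairs_with_undominated_def vertex_pairs_def by blast
qed

lemma domination_number_and_diam_compl_graph_eq_2_iff:
  assumes fin: "finite (verts G)" and three: "3 \<le> card (verts G)"
  shows "domination_number G = 2 \<and> diam (compl_graph G) = 2 \<longleftrightarrow>
    pairs_with_undominated G True 0 = {} \<and> pairs_with_undominated G False 0 \<noteq> {}"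
proof (cases "pairs_with_undominated G True 0 = {}")
  case True
  then have no_dominating_edge:
    "\<And>x y. x \<in> verts G \<Longrightarrow> y \<in> verts G \<Longrightarrow> x \<noteq> y \<Longrightarrow> adj G x y \<Longrightarrow> undominated G {x, y} \<noteq> {}"
    by (simp add: pairs_with_undominated_0_eq_empty_iff[OF fin])
  have "(\<exists>x y. x \<noteq> y \<and> dominating G {x, y}) \<longleftrightarrow> pairs_with_undominated G False 0 \<noteq> {}"
    using no_dominating_edge
    by (auto simp: pairs_with_undominated_0_eq_empty_iff[OF fin] dominating_iff_undominated_empty)
  then have domination: "domination_number G = 2 \<longleftrightarrow> pairs_with_undominated G False 0 \<noteq> {}"
    using domination_number_eq_2_iff[OF fin _ no_dominating_edge] three by simp
  have "diam (compl_graph G) = 2" if dominating_pair: "pairs_with_undominated G False 0 \<noteq> {}"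
  proof -
    obtain x y where xy: "x \<in> verts G" "y \<in> verts G" "undominated G {x, y} = {}"
      using dominating_pair unfolding pairs_with_undominated_0_eq_empty_iff[OF fin] by blast
    have "card {x, y} \<le> 2"
      by (cases "x = y") auto
    then have "card {x, y} < card (verts G)"
      using three by linarith
    then obtain c where c: "c \<in> verts G" "c \<noteq> x" "c \<noteq> y"
      using exists_not_in_of_card_less[of "{x, y}" "verts G"] by auto
    then obtain s where "s \<in> {x, y}" "adj G s c"
      using xy unfolding undominated_def by blast
    moreover have "s \<in> verts G" "s \<noteq> c"
      using \<open>s \<in> {x, y}\<close> xy c by auto
    ultimately have "\<exists>x\<in>verts G. \<exists>y\<in>verts G. x \<noteq> y \<and> adj G x y"
      using c(1) by blast
    then show ?thesis
      using no_dominating_edge by (simp add: diam_compl_graph_eq_2_iff)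
  qed
  then show ?thesis
    using True domination by blast
next
  case False
  then have "diam (compl_graph G) \<noteq> 2"
    by (simp add: diam_compl_graph_eq_2_iff pairs_with_undominated_0_eq_empty_iff[OF fin])
  then show ?thesis
    using False by blast
qed

lemma class_H2_iff_pairs_with_undominated:
  "class_H2 G \<longleftrightarrow> wf_graph G \<and> 12 \<le> card (verts G) \<and>
    pairs_with_undominated G True 0 = {} \<and> pairs_with_undominated G False 0 \<noteq> {}"
proof (cases "wf_graph G \<and> 12 \<le> card (verts G)")
  case True
  then have "finite (verts G)" "3 \<le> card (verts G)"
    by (auto simp: wf_graph_def)
  then show ?thesis
    using domination_number_and_diam_compl_graph_eq_2_iff[of G] True by (simp add: class_H2_def)
next
  case False
  then show ?thesis
    by (auto simp: class_H2_def)
qed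

theorem lemma10:
  fixes G :: "'a graph" and H :: "'b graph"
  assumes "class_H2 G"
    and "wf_graph H"
    and "same_deck G H"
  shows "class_H2 H"
proof -
  have G: "wf_graph G" "12 \<le> card (verts G)"
    "pairs_with_undominated G True 0 = {}" "pairs_with_undominated G False 0 \<noteq> {}"
    using assms(1) by (auto simp: class_H2_iff_pairs_with_undominated)
  have finG: "finite (verts G)" and finH: "finite (verts H)"
    using G(1) assms(2) by (auto simp: wf_graph_def)
  have "card (pairs_with_undominated G b 0) = card (pairs_with_undominated H b 0)" for b
    using card_pairs_with_undominated_same_deck[OF assms(3) finG finH] G(2) by simp
  then have "pairs_with_undominated G b 0 = {} \<longleftrightarrow> pairs_with_undominated H b 0 = {}" for b
    using finite_pairs_with_undominated finG finH by (metis card_0_eq)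
  then show ?thesis
    using G assms(2) card_verts_same_deck[OF assms(3)]
    by (simp add: class_H2_iff_pairs_with_undominated)
qed

end
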